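(* If $X$ is a metric space, then $e(X\ast I)=e(X)$.
   Context: Let $I=\mathbb R_{\ge0}\times\mathbb R_{\ge0}$ with the Manhattan metric $d((s_1,t_1),(s_2,t_2))=|s_1-s_2|+|t_1-t_2|$. For a metric space $X$ with base point $x_0$, the asymptotic product is $X\ast I=\{(x,i)\in X\times I: d(x,x_0)=d(i,(0,0))\}$ with the metric $d((x,i),(y,j))=d(x,y)+d(i,j)$. A subset is bounded if it has finite diameter. Finitely many pairwise disjoint subsets $U_1,\dots,U_n$ of a metric space $Z$ with union $Z$ form a coarse disjoint union of $Z$ if for every $R\ge0$ and every $i\ne j$ the set $\{z:d(z,U_i)\le R\}\cap\{z:d(z,U_j)\le R\}$ is bounded. The number of ends $e(Z)$ is $0$ if $Z$ is bounded and otherwise the supremum (possibly $\infty$) of those $n$ for which $Z$ is a coarse disjoint union of $n$ unbounded subsets. *)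

theory Defs
  imports "HOL-Analysis.Analysis"
begin

definition bdd_diam :: "('a \<Rightarrow> 'a \<Rightarrow> real) \<Rightarrow> 'a set \<Rightarrow> bool" where
  "bdd_diam d S \<longleftrightarrow> (\<exists>B. \<forall>x\<in>S. \<forall>y\<in>S. d x y \<le> B)"

text \<open>d(z,U) \<le> R, with d(z,U) the infimum of d(z,u) over u in U (infinite for empty U).\<close>
definition setdist_le :: "('a \<Rightarrow> 'a \<Rightarrow> real) \<Rightarrow> 'a \<Rightarrow> 'a set \<Rightarrow> real \<Rightarrow> bool" where
  "setdist_le d z U R \<longleftrightarrow> (\<forall>e>0. \<exists>u\<in>U. d z u < R + e)"

definition coarse_disjoint_union ::
  "'a set \<Rightarrow> ('a \<Rightarrow> 'a \<Rightarrow> real) \<Rightarrow> nat \<Rightarrow> (nat \<Rightarrow> 'a set) \<Rightarrow> bool" where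
  "coarse_disjoint_union Z d n U \<longleftrightarrow>
     (\<forall>i<n. \<forall>j<n. i \<noteq> j \<longrightarrow> U i \<inter> U j = {}) \<and>
     (\<Union>i<n. U i) = Z \<and>
     (\<forall>R\<ge>0. \<forall>i<n. \<forall>j<n. i \<noteq> j \<longrightarrow>
        bdd_diam d {z\<in>Z. setdist_le d z (U i) R \<and> setdist_le d z (U j) R})"

definition ends :: "'a set \<Rightarrow> ('a \<Rightarrow> 'a \<Rightarrow> real) \<Rightarrow> enat" where
  "ends Z d = (if bdd_diam d Z then 0
     else Sup {enat n | n. \<exists>U. coarse_disjoint_union Z d n U \<and> (\<forall>i<n. \<not> bdd_diam d (U i))})"

text \<open>The asymptotic product X * I, I = quadrant with Manhattan metric.\<close>
definition asym_prod :: "'a set \<Rightarrow> ('a \<Rightarrow> 'a \<Rightarrow> real) \<Rightarrow> 'a \<Rightarrow> ('a \<times> (real \<times> real)) set" where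
  "asym_prod X d x0 = {(x, (s, t)). x \<in> X \<and> 0 \<le> s \<and> 0 \<le> t \<and> d x x0 = \<bar>s - 0\<bar> + \<bar>t - 0\<bar>}"

definition asym_dist :: "('a \<Rightarrow> 'a \<Rightarrow> real) \<Rightarrow> ('a \<times> (real \<times> real)) \<Rightarrow> ('a \<times> (real \<times> real)) \<Rightarrow> real" where
  "asym_dist d p q = d (fst p) (fst q) + (\<bar>fst (snd p) - fst (snd q)\<bar> + \<bar>snd (snd p) - snd (snd q)\<bar>)"

end

theory Submission
  imports Defs
begin

text \<open>
  The projection \<open>fst : X * I \<rightarrow> X\<close> is 1-Lipschitz and pulls bounded sets back to bounded
  sets; \<open>embed x = (x, (|x|, 0))\<close> is a section of it with \<open>d x y \<le> D (embed x) (embed y) \<le> 2 d x y\<close>.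
  Pulling a coarse disjoint union back along either map therefore gives one of the other space,
  and unbounded pieces of \<open>X\<close> stay unbounded in \<open>X * I\<close>.
  The real point is the converse: the fibre over \<open>x\<close> is a segment joining each of its points to
  \<open>embed x\<close>, which can be walked in steps of length 1 at constant radius \<open>|x|\<close>. The
  1-neighbourhoods of two distinct pieces meet only in a bounded set, so far from the base point
  such a walk never changes pieces: a piece reaching arbitrarily far out contains the embedded
  projections of its far points, and its pull-back along \<open>embed\<close> is unbounded.
\<close>

lemma bdd_diam_mono: "bdd_diam d S \<Longrightarrow> T \<subseteq> S \<Longrightarrow> bdd_diam d T"
  unfolding bdd_diam_def by blast

lemma setdist_leI: "u \<in> U \<Longrightarrow> d z u \<le> R \<Longrightarrow> setdist_le d z U R"
  unfolding setdist_le_def by force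

lemma setdist_le_Lipschitz_image:
  assumes "setdist_le D z V R" and "0 < L"
    and "\<And>v. v \<in> V \<Longrightarrow> f v \<in> U \<and> d (f z) (f v) \<le> L * D z v"
  shows "setdist_le d (f z) U (L * R)"
  unfolding setdist_le_def
proof (intro allI impI)
  fix e :: real assume "0 < e"
  then obtain v where v: "v \<in> V" "D z v < R + e / L"
    using assms(1,2) unfolding setdist_le_def by (meson divide_pos_pos)
  have "L * D z v < L * (R + e / L)"
    using v(2) assms(2) by (rule mult_strict_left_mono)
  then have "d (f z) (f v) < L * R + e"
    using assms(2) assms(3)[OF v(1)] by (simp add: distrib_left)
  then show "\<exists>u\<in>U. d (f z) u < L * R + e" using assms(3) v(1) by blast
qed

lemma bdd_diam_preimage_expanding:
  assumes "bdd_diam D B" and "\<And>x y. x \<in> S \<Longrightarrow> y \<in> S \<Longrightarrow> d x y \<le> D (g x) (g y)"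
  shows "bdd_diam d {x\<in>S. g x \<in> B}"
proof -
  obtain C where "\<And>u v. u \<in> B \<Longrightarrow> v \<in> B \<Longrightarrow> D u v \<le> C"
    using assms(1) unfolding bdd_diam_def by blast
  then show ?thesis
    using assms(2) unfolding bdd_diam_def by (blast intro: order_trans)
qed

lemma coarse_disjoint_union_preimage:
  assumes cdu: "coarse_disjoint_union X d n U"
    and into: "f ` Z \<subseteq> X"
    and Lipschitz: "0 < L" "\<And>z w. z \<in> Z \<Longrightarrow> w \<in> Z \<Longrightarrow> d (f z) (f w) \<le> L * D z w"
    and bdd: "\<And>B. B \<subseteq> X \<Longrightarrow> bdd_diam d B \<Longrightarrow> bdd_diam D {z\<in>Z. f z \<in> B}"
  shows "coarse_disjoint_union Z D n (\<lambda>i. {z\<in>Z. f z \<in> U i})"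
  unfolding coarse_disjoint_union_def
proof (intro conjI allI impI)
  fix i j assume "i < n" "j < n" "i \<noteq> j"
  then show "{z\<in>Z. f z \<in> U i} \<inter> {z\<in>Z. f z \<in> U j} = {}"
    using cdu unfolding coarse_disjoint_union_def by blast
next
  show "(\<Union>i<n. {z\<in>Z. f z \<in> U i}) = Z"
    using cdu into unfolding coarse_disjoint_union_def by blast
next
  fix R :: real and i j assume "0 \<le> R" "i < n" "j < n" "i \<noteq> j"
  let ?N = "\<lambda>V. {z\<in>V. setdist_le d z (U i) (L * R) \<and> setdist_le d z (U j) (L * R)}"
  have "bdd_diam D {z\<in>Z. f z \<in> ?N X}"
    using cdu \<open>0 \<le> R\<close> \<open>i < n\<close> \<open>j < n\<close> \<open>i \<noteq> j\<close> Lipschitz(1)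
    by (intro bdd) (auto simp: coarse_disjoint_union_def)
  moreover have "setdist_le d (f z) (U k) (L * R)"
    if "z \<in> Z" "setdist_le D z {z\<in>Z. f z \<in> U k} R" for z k
    using that Lipschitz by (intro setdist_le_Lipschitz_image) auto
  ultimately show "bdd_diam D {z\<in>Z. setdist_le D z {z\<in>Z. f z \<in> U i} R \<and> setdist_le D z {z\<in>Z. f z \<in> U j} R}"
    using into by (elim bdd_diam_mono) blast
qed

lemma ends_eqI:
  assumes "bdd_diam D Z \<longleftrightarrow> bdd_diam d X"
    and "\<And>n. (\<exists>V. coarse_disjoint_union Z D n V \<and> (\<forall>i<n. \<not> bdd_diam D (V i)))
            \<longleftrightarrow> (\<exists>U. coarse_disjoint_union X d n U \<and> (\<forall>i<n. \<not> bdd_diam d (U i)))"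
  shows "ends Z D = ends X d"
  unfolding ends_def using assms by simp

context Metric_space
begin

lemma bdd_diam_iff_bdd_above_dist:
  assumes "a \<in> M" and "S \<subseteq> M"
  shows "bdd_diam d S \<longleftrightarrow> bdd_above (d a ` S)"
proof
  assume "bdd_diam d S"
  then obtain B where B: "\<And>x y. x \<in> S \<Longrightarrow> y \<in> S \<Longrightarrow> d x y \<le> B"
    unfolding bdd_diam_def by blast
  show "bdd_above (d a ` S)"
  proof (cases "S = {}")
    case False
    then obtain s where "s \<in> S" by blast
    then have "d a x \<le> d a s + B" if "x \<in> S" for x
      using B[of s x] triangle[of a s x] assms that by force
    then show ?thesis by (intro bdd_aboveI2)
  qed simp
next
  assume "bdd_above (d a ` S)"
  then obtain B where B: "\<And>x. x \<in> S \<Longrightarrow> d a x \<le> B"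
    by (auto simp: bdd_above_def)
  have "d x y \<le> 2 * B" if "x \<in> S" "y \<in> S" for x y
    using triangle[of x a y] commute[of x a] B[OF that(1)] B[OF that(2)] assms that by force
  then show "bdd_diam d S" unfolding bdd_diam_def by blast
qed

lemma coarse_disjoint_union_chain:
  assumes cdu: "coarse_disjoint_union M d n V" and "i < n" and "0 \<le> R"
    and chain: "\<And>k. k \<le> N \<Longrightarrow> w k \<in> M" "\<And>k. k < N \<Longrightarrow> d (w (Suc k)) (w k) \<le> R"
    and start: "w 0 \<in> V i"
    and avoid: "\<And>k j. k \<le> N \<Longrightarrow> j < n \<Longrightarrow> j \<noteq> i \<Longrightarrow>
                   \<not> (setdist_le d (w k) (V i) R \<and> setdist_le d (w k) (V j) R)"
  shows "w N \<in> V i"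
proof -
  have "k \<le> N \<Longrightarrow> w k \<in> V i" for k
  proof (induction k)
    case 0 show ?case by (fact start)
  next
    case (Suc k)
    obtain j where j: "j < n" "w (Suc k) \<in> V j"
      using cdu chain(1)[OF Suc.prems] unfolding coarse_disjoint_union_def by blast
    have "setdist_le d (w (Suc k)) (V i) R"
      using Suc chain(2) by (intro setdist_leI[of "w k"]) auto
    moreover have "setdist_le d (w (Suc k)) (V j) R"
      using j chain(1)[OF Suc.prems] \<open>0 \<le> R\<close> by (intro setdist_leI) auto
    ultimately show ?case using avoid[OF Suc.prems j(1)] j by blast
  qed
  then show ?thesis by simp
qed

end

locale asymptotic_product = Metric_space X d for X and d :: "'a \<Rightarrow> 'a \<Rightarrow> real" +
  fixes x0 :: 'a
  assumes base_point: "x0 \<in> X"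
begin

abbreviation "Z \<equiv> asym_prod X d x0"
abbreviation "D \<equiv> asym_dist d"

definition embed :: "'a \<Rightarrow> 'a \<times> real \<times> real" where
  "embed x = (x, d x x0, 0)"

lemma mem_asym_prod_iff:
  "(x, s, t) \<in> Z \<longleftrightarrow> x \<in> X \<and> 0 \<le> s \<and> 0 \<le> t \<and> d x x0 = s + t"
  unfolding asym_prod_def by auto

lemma fst_mem_of_asym_prod: "z \<in> Z \<Longrightarrow> fst z \<in> X"
  by (cases z) (simp add: mem_asym_prod_iff)

lemma embed_in_asym_prod: "x \<in> X \<Longrightarrow> embed x \<in> Z"
  by (simp add: embed_def mem_asym_prod_iff)

lemma fst_embed [simp]: "fst (embed x) = x"
  by (simp add: embed_def)

sublocale Z: Metric_space Z D
proof
  fix z w u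
  show "0 \<le> D z w" "D z w = D w z"
    by (auto simp: asym_dist_def commute)
  assume "z \<in> Z" "w \<in> Z" "u \<in> Z"
  then show "D z w = 0 \<longleftrightarrow> z = w"
    by (cases z, cases w) (auto simp: asym_dist_def mem_asym_prod_iff add_nonneg_eq_0_iff)
  have "d (fst z) (fst u) \<le> d (fst z) (fst w) + d (fst w) (fst u)"
    using \<open>z \<in> Z\<close> \<open>w \<in> Z\<close> \<open>u \<in> Z\<close> by (intro triangle) (auto dest: fst_mem_of_asym_prod)
  then show "D z u \<le> D z w + D w u"
    unfolding asym_dist_def by linarith
qed

lemma asym_dist_embed_lower: "d x y \<le> D (embed x) (embed y)"
  by (simp add: embed_def asym_dist_def)

lemma asym_dist_embed_upper:
  assumes "x \<in> X" "y \<in> X"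
  shows "D (embed x) (embed y) \<le> 2 * d x y"
proof -
  have "\<bar>d x x0 - d y x0\<bar> \<le> d x y"
    using triangle[of x y x0] triangle[of y x x0] commute[of x y] assms base_point by linarith
  then show ?thesis by (simp add: embed_def asym_dist_def)
qed

lemma asym_dist_fst_le: "d (fst z) (fst w) \<le> D z w"
  by (simp add: asym_dist_def)

lemma bdd_diam_iff_bdd_above_radius:
  assumes "S \<subseteq> Z"
  shows "bdd_diam D S \<longleftrightarrow> bdd_above ((\<lambda>z. d x0 (fst z)) ` S)"
proof -
  define origin where "origin = (x0, 0 :: real, 0 :: real)"
  have origin: "origin \<in> Z"
    using base_point by (simp add: origin_def mem_asym_prod_iff)
  have "D origin z = 2 * d x0 (fst z)" if "z \<in> Z" for z
    using that commute[of x0] by (cases z) (auto simp: origin_def asym_dist_def mem_asym_prod_iff)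
  then have "D origin ` S = (\<lambda>z. 2 * d x0 (fst z)) ` S"
    using assms by (intro image_cong) auto
  also have "bdd_above \<dots> \<longleftrightarrow> bdd_above ((\<lambda>z. d x0 (fst z)) ` S)"
  proof
    assume "bdd_above ((\<lambda>z. 2 * d x0 (fst z)) ` S)"
    then obtain B where "\<And>z. z \<in> S \<Longrightarrow> 2 * d x0 (fst z) \<le> B"
      by (auto simp: bdd_above_def)
    then show "bdd_above ((\<lambda>z. d x0 (fst z)) ` S)"
      by (intro bdd_aboveI2[where M = "B / 2"]) force
  next
    assume "bdd_above ((\<lambda>z. d x0 (fst z)) ` S)"
    then obtain B where "\<And>z. z \<in> S \<Longrightarrow> d x0 (fst z) \<le> B"
      by (auto simp: bdd_above_def)
    then show "bdd_above ((\<lambda>z. 2 * d x0 (fst z)) ` S)"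
      by (intro bdd_aboveI2[where M = "2 * B"]) force
  qed
  finally show ?thesis
    using Z.bdd_diam_iff_bdd_above_dist[OF origin assms] by simp
qed

lemma bdd_diam_preimage_fst:
  assumes "B \<subseteq> X" and "bdd_diam d B"
  shows "bdd_diam D {z\<in>Z. fst z \<in> B}"
proof -
  have "bdd_above (d x0 ` B)"
    using assms bdd_diam_iff_bdd_above_dist[OF base_point] by simp
  then have "bdd_above ((\<lambda>z. d x0 (fst z)) ` {z\<in>Z. fst z \<in> B})"
    by (rule bdd_above_mono) auto
  then show ?thesis by (subst bdd_diam_iff_bdd_above_radius) auto
qed

lemma bdd_diam_preimage_embed:
  assumes "bdd_diam D B"
  shows "bdd_diam d {x\<in>X. embed x \<in> B}"
  using assms by (rule bdd_diam_preimage_expanding) (rule asym_dist_embed_lower)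

lemma bdd_diam_asym_prod_iff: "bdd_diam D Z \<longleftrightarrow> bdd_diam d X"
proof -
  have "fst ` Z = X"
  proof
    show "X \<subseteq> fst ` Z"
      using embed_in_asym_prod fst_embed by (metis image_eqI subsetI)
  qed (use fst_mem_of_asym_prod in blast)
  then have "(\<lambda>z. d x0 (fst z)) ` Z = d x0 ` X"
    by (simp add: image_image[symmetric])
  then show ?thesis
    by (simp add: bdd_diam_iff_bdd_above_radius bdd_diam_iff_bdd_above_dist[OF base_point])
qed

lemma fiber_chain:
  assumes "z \<in> Z"
  obtains N w where "w 0 = z" and "w N = embed (fst z)"
    and "\<And>k. k \<le> N \<Longrightarrow> w k \<in> Z \<and> fst (w k) = fst z"
    and "\<And>k. k < N \<Longrightarrow> D (w (Suc k)) (w k) \<le> 1"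
proof -
  obtain x s t where z: "z = (x, s, t)" by (cases z)
  with assms have x: "x \<in> X" and st: "0 \<le> s" "0 \<le> t" "d x x0 = s + t"
    by (auto simp: mem_asym_prod_iff)
  define N where "N = nat \<lceil>2 * t\<rceil>"
  define h where "h = t / N"
  define w where "w k = (x, s + k * h, t - k * h)" for k :: nat
  \<comment> \<open>\<open>N = 0\<close> only when \<open>t = 0\<close>, so the junk value \<open>h = t / 0 = 0\<close> is harmless\<close>
  have "N = 0 \<Longrightarrow> t = 0"
    using st(2) by (simp add: N_def)
  then have Nh: "N * h = t"
    by (cases "N = 0") (auto simp: h_def)
  have "2 * t \<le> N"
    unfolding N_def by linarith
  then have "2 * h \<le> 1"
    using st(2) by (cases "N = 0") (auto simp: h_def field_simps)
  have "0 \<le> h"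
    using st(2) by (simp add: h_def)
  show thesis
  proof
    show "w 0 = z" "w N = embed (fst z)"
      using Nh st by (simp_all add: w_def z embed_def)
    show "w k \<in> Z \<and> fst (w k) = fst z" if "k \<le> N" for k
    proof -
      have "k * h \<le> N * h"
        using that \<open>0 \<le> h\<close> by (simp add: mult_right_mono)
      then show ?thesis
        using x st \<open>0 \<le> h\<close> Nh by (simp add: w_def z mem_asym_prod_iff)
    qed
    show "D (w (Suc k)) (w k) \<le> 1" for k
      using \<open>2 * h \<le> 1\<close> \<open>0 \<le> h\<close> x by (simp add: w_def asym_dist_def algebra_simps)
  qed
qed

lemma far_point_embed_in_piece:
  assumes cdu: "coarse_disjoint_union Z D n V" and "i < n"
  obtains M where "\<And>z. z \<in> V i \<Longrightarrow> M < d x0 (fst z) \<Longrightarrow> embed (fst z) \<in> V i"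
proof -
  define B where "B j = {z\<in>Z. setdist_le D z (V i) 1 \<and> setdist_le D z (V j) 1}" for j
  have "bdd_above ((\<lambda>z. d x0 (fst z)) ` B j)" if "j \<in> {j. j < n \<and> j \<noteq> i}" for j
    using cdu \<open>i < n\<close> that unfolding coarse_disjoint_union_def B_def
    by (subst bdd_diam_iff_bdd_above_radius[symmetric]) auto
  then have "bdd_above (\<Union>j\<in>{j. j < n \<and> j \<noteq> i}. (\<lambda>z. d x0 (fst z)) ` B j)"
    by simp
  then obtain M where M: "\<And>j z. j < n \<Longrightarrow> j \<noteq> i \<Longrightarrow> z \<in> B j \<Longrightarrow> d x0 (fst z) \<le> M"
    by (auto simp: bdd_above_def)
  show thesis
  proof
    fix z assume z: "z \<in> V i" "M < d x0 (fst z)"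
    then have "z \<in> Z"
      using cdu \<open>i < n\<close> unfolding coarse_disjoint_union_def by blast
    then obtain N w where w: "w 0 = z" "w N = embed (fst z)"
      "\<And>k. k \<le> N \<Longrightarrow> w k \<in> Z \<and> fst (w k) = fst z" "\<And>k. k < N \<Longrightarrow> D (w (Suc k)) (w k) \<le> 1"
      by (rule fiber_chain) auto
    have "w N \<in> V i"
    proof (rule Z.coarse_disjoint_union_chain[OF cdu \<open>i < n\<close> zero_le_one])
      fix k j assume "k \<le> N" "j < n" "j \<noteq> i"
      then show "\<not> (setdist_le D (w k) (V i) 1 \<and> setdist_le D (w k) (V j) 1)"
        using M[of j "w k"] w(3)[of k] z(2) by (auto simp: B_def)
    qed (use w z in auto)
    then show "embed (fst z) \<in> V i"
      using w(2) by simp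
  qed
qed

lemma unbounded_pieces_to_asym_prod:
  assumes cdu: "coarse_disjoint_union X d n U" and unbdd: "\<forall>i<n. \<not> bdd_diam d (U i)"
  shows "\<exists>V. coarse_disjoint_union Z D n V \<and> (\<forall>i<n. \<not> bdd_diam D (V i))"
proof (intro exI conjI allI impI)
  show "coarse_disjoint_union Z D n (\<lambda>i. {z\<in>Z. fst z \<in> U i})"
    by (rule coarse_disjoint_union_preimage[OF cdu, where L = 1])
      (auto simp: mem_asym_prod_iff asym_dist_fst_le bdd_diam_preimage_fst)
  fix i assume "i < n"
  then have "U i \<subseteq> X"
    using cdu unfolding coarse_disjoint_union_def by blast
  then have U_eq: "{x\<in>U i. embed x \<in> {z\<in>Z. fst z \<in> U i}} = U i"
    using embed_in_asym_prod by auto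
  show "\<not> bdd_diam D {z\<in>Z. fst z \<in> U i}"
  proof
    assume "bdd_diam D {z\<in>Z. fst z \<in> U i}"
    then have "bdd_diam d {x\<in>U i. embed x \<in> {z\<in>Z. fst z \<in> U i}}"
      by (rule bdd_diam_preimage_expanding) (rule asym_dist_embed_lower)
    then show False
      using U_eq unbdd \<open>i < n\<close> by simp
  qed
qed

lemma unbounded_pieces_from_asym_prod:
  assumes cdu: "coarse_disjoint_union Z D n V" and unbdd: "\<forall>i<n. \<not> bdd_diam D (V i)"
  shows "\<exists>U. coarse_disjoint_union X d n U \<and> (\<forall>i<n. \<not> bdd_diam d (U i))"
proof (intro exI conjI allI impI)
  show "coarse_disjoint_union X d n (\<lambda>i. {x\<in>X. embed x \<in> V i})"
    by (rule coarse_disjoint_union_preimage[OF cdu, where L = 2])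
      (auto simp: embed_in_asym_prod asym_dist_embed_upper bdd_diam_preimage_embed)
  fix i assume "i < n"
  obtain M where M: "\<And>z. z \<in> V i \<Longrightarrow> M < d x0 (fst z) \<Longrightarrow> embed (fst z) \<in> V i"
    using far_point_embed_in_piece[OF cdu \<open>i < n\<close>] by blast
  have "V i \<subseteq> Z"
    using cdu \<open>i < n\<close> unfolding coarse_disjoint_union_def by blast
  then have "\<not> bdd_above ((\<lambda>z. d x0 (fst z)) ` V i)"
    using unbdd \<open>i < n\<close> bdd_diam_iff_bdd_above_radius by blast
  then have far: "\<exists>z\<in>V i. K < d x0 (fst z)" for K
    by (meson bdd_aboveI2 not_less)
  show "\<not> bdd_diam d {x\<in>X. embed x \<in> V i}"
  proof
    assume "bdd_diam d {x\<in>X. embed x \<in> V i}"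
    then obtain K where K: "\<And>x. x \<in> X \<Longrightarrow> embed x \<in> V i \<Longrightarrow> d x0 x \<le> K"
      by (subst (asm) bdd_diam_iff_bdd_above_dist[OF base_point]) (auto simp: bdd_above_def)
    obtain z where z: "z \<in> V i" "max K M < d x0 (fst z)"
      using far by blast
    have "fst z \<in> X"
      using z(1) \<open>V i \<subseteq> Z\<close> fst_mem_of_asym_prod by blast
    moreover have "embed (fst z) \<in> V i"
      using M z by simp
    ultimately show False
      using K z(2) by fastforce
  qed
qed

lemma ends_asym_prod: "ends Z D = ends X d"
  using bdd_diam_asym_prod_iff
  by (rule ends_eqI) (metis unbounded_pieces_to_asym_prod unbounded_pieces_from_asym_prod)

end

theorem mainTheorem15:
  fixes X :: "'a set" and d :: "'a \<Rightarrow> 'a \<Rightarrow> real" and x0 :: 'a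
  assumes "Metric_space X d" and "x0 \<in> X"
  shows "ends (asym_prod X d x0) (asym_dist d) = ends X d"
proof -
  interpret asymptotic_product X d x0
    using assms by (intro asymptotic_product.intro asymptotic_product_axioms.intro)
  show ?thesis by (fact ends_asym_prod)
qed

end
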